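(* Let $\mathcal C=(\Lambda+\mathbf t)\cap\triangle_n^{q-1}$ be a linear multiset code with $d_1(\mathcal C)>h$, where $\Lambda\subseteq A_{q-1}$ is a lattice and $\mathbf t\in\mathbb Z^q$ satisfies $\sum_i t_i=n$ and $t_i\ge h$ for all $i\in[q]$. Then there exist an Abelian group $G$, a $B_h$ set $B=\{b_0,\dots,b_{q-1}\}\subseteq G$ and $b\in G$ such that $\mathcal C=\{\mathbf x\in\triangle_n^{q-1}:\sum_{i=0}^{q-1}x_ib_i=b\}$.
   Context: $[q]=\{0,\dots,q-1\}$; $\triangle_n^{q-1}=\{\mathbf x\in\mathbb Z^q:x_i\ge0,\sum_ix_i=n\}$; $A_{q-1}=\{\mathbf x\in\mathbb Z^q:\sum_ix_i=0\}$; a lattice is a subgroup of $(\mathbb Z^q,+)$. A multiset code is a subset of $\triangle_n^{q-1}$ with at least two elements; it is linear if it equals $(\Lambda+\mathbf t)\cap\triangle_n^{q-1}$ for some lattice $\Lambda\subseteq A_{q-1}$ and $\mathbf t\in\mathbb Z^q$ with $\sum_it_i=n$. $d_1(\mathbf x,\mathbf y)=\frac12\sum_i|x_i-y_i|$, $d_1(\mathcal C)$ the minimum distance. A set $\{b_0,\dots,b_{q-1}\}$ in an Abelian group is a $B_h$ set if the sums $b_{i_1}+\dots+b_{i_h}$, $0\le i_1\le\dots\le i_h\le q-1$, are pairwise different; $x_ib_i$ denotes the $x_i$-fold sum in $G$ (with $-b_i$ for negative $x_i$). *)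

theory Defs
  imports "HOL-Algebra.Algebra"
begin

text \<open>Vectors in Z^q are functions from a finite index type 'q (playing the role of [q])
  to int.\<close>

definition simplex :: "nat \<Rightarrow> ('q::finite \<Rightarrow> int) set" where
  "simplex n = {x. (\<forall>i. x i \<ge> 0) \<and> (\<Sum>i\<in>UNIV. x i) = int n}"

definition A_root :: "('q::finite \<Rightarrow> int) set" where
  "A_root = {x. (\<Sum>i\<in>UNIV. x i) = 0}"

definition is_lattice :: "('q \<Rightarrow> int) set \<Rightarrow> bool" where
  "is_lattice L \<longleftrightarrow> (\<lambda>_. 0) \<in> L \<and> (\<forall>x\<in>L. \<forall>y\<in>L. (\<lambda>i. x i + y i) \<in> L)
     \<and> (\<forall>x\<in>L. (\<lambda>i. - x i) \<in> L)"

definition coset :: "('q \<Rightarrow> int) set \<Rightarrow> ('q \<Rightarrow> int) \<Rightarrow> ('q \<Rightarrow> int) set" where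
  "coset L t = {(\<lambda>i. x i + t i) | x. x \<in> L}"

definition multiset_code :: "nat \<Rightarrow> ('q::finite \<Rightarrow> int) set \<Rightarrow> bool" where
  "multiset_code n C \<longleftrightarrow> C \<subseteq> simplex n \<and> card C \<ge> 2"

definition d1 :: "('q::finite \<Rightarrow> int) \<Rightarrow> ('q \<Rightarrow> int) \<Rightarrow> real" where
  "d1 x y = (1/2) * (\<Sum>i\<in>UNIV. real_of_int \<bar>x i - y i\<bar>)"

definition min_dist :: "('q::finite \<Rightarrow> int) set \<Rightarrow> real" where
  "min_dist C = Min {d1 x y | x y. x \<in> C \<and> y \<in> C \<and> x \<noteq> y}"

text \<open>B_h property of the indexed family b_0,...,b_{q-1} in an abelian group G (written
  multiplicatively, as in HOL-Algebra): a nondecreasing index tuple i_1 \<le> ... \<le> i_h is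
  encoded by its multiplicity function m :: 'q \<Rightarrow> nat with sum h, and the sum
  b_{i_1}+...+b_{i_h} is the product of the b_i^(m i).\<close>

definition Bh_set :: "('g, 'c) monoid_scheme \<Rightarrow> nat \<Rightarrow> ('q::finite \<Rightarrow> 'g) \<Rightarrow> bool" where
  "Bh_set G h b \<longleftrightarrow> (\<forall>i. b i \<in> carrier G) \<and>
     (\<forall>m m' :: 'q \<Rightarrow> nat. (\<Sum>i\<in>UNIV. m i) = h \<longrightarrow> (\<Sum>i\<in>UNIV. m' i) = h \<longrightarrow>
        finprod G (\<lambda>i. b i [^]\<^bsub>G\<^esub> m i) UNIV = finprod G (\<lambda>i. b i [^]\<^bsub>G\<^esub> m' i) UNIV
        \<longrightarrow> m = m')"

end

theory Submission
  imports Defs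
begin

text \<open>The group is \<open>\<int>\<^sup>q / \<Lambda>\<close> and \<open>b\<^sub>i\<close> is the class of the \<open>i\<close>-th unit vector, so
  \<open>\<Sum> x\<^sub>i b\<^sub>i\<close> is the class of \<open>x\<close> and \<open>\<C>\<close> is the fibre over the class of \<open>t\<close>. If two
  multisets \<open>m \<noteq> m'\<close> of size \<open>h\<close> had equal sums, then \<open>m - m' \<in> \<Lambda>\<close>; since \<open>t\<^sub>i \<ge> h\<close>,
  the vector \<open>t + m - m'\<close> is again a codeword, at distance at most \<open>h\<close> from the codeword
  \<open>t\<close>, contradicting \<open>d\<^sub>1(\<C>) > h\<close>.\<close>

lemma lattice_zero: "is_lattice L \<Longrightarrow> (\<lambda>_. 0) \<in> L"
  unfolding is_lattice_def by blast

lemma lattice_add: "is_lattice L \<Longrightarrow> x \<in> L \<Longrightarrow> y \<in> L \<Longrightarrow> (\<lambda>i. x i + y i) \<in> L"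
  unfolding is_lattice_def by blast

lemma lattice_diff:
  assumes "is_lattice L" "x \<in> L" "y \<in> L"
  shows "(\<lambda>i. x i - y i) \<in> L"
proof -
  have "(\<lambda>i. - y i) \<in> L" using assms(1,3) unfolding is_lattice_def by blast
  from lattice_add[OF assms(1,2) this] show ?thesis by simp
qed

lemma mem_coset_iff: "y \<in> coset L x \<longleftrightarrow> (\<lambda>i. y i - x i) \<in> L"
proof
  assume "y \<in> coset L x"
  then obtain z where "z \<in> L" "y = (\<lambda>i. z i + x i)" unfolding coset_def by blast
  then show "(\<lambda>i. y i - x i) \<in> L" by simp
next
  assume "(\<lambda>i. y i - x i) \<in> L"
  then show "y \<in> coset L x" unfolding coset_def by (auto intro!: exI[of _ "\<lambda>i. y i - x i"])
qed

lemma self_mem_coset: "is_lattice L \<Longrightarrow> x \<in> coset L x"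
  by (simp add: mem_coset_iff lattice_zero)

lemma coset_zero: "coset L (\<lambda>_. 0) = L"
  unfolding coset_def by auto

lemma coset_eq_iff:
  assumes L: "is_lattice L"
  shows "coset L x = coset L y \<longleftrightarrow> (\<lambda>i. x i - y i) \<in> L"
proof
  assume "coset L x = coset L y"
  then show "(\<lambda>i. x i - y i) \<in> L" using self_mem_coset[OF L, of x] by (simp add: mem_coset_iff)
next
  assume d: "(\<lambda>i. x i - y i) \<in> L"
  have "(\<lambda>i. z i - x i) \<in> L \<longleftrightarrow> (\<lambda>i. z i - y i) \<in> L" for z
    using lattice_add[OF L _ d, of "\<lambda>i. z i - x i"] lattice_diff[OF L _ d, of "\<lambda>i. z i - y i"]
    by auto
  then show "coset L x = coset L y" by (auto simp: mem_coset_iff)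
qed

definition quotient_group :: "('q \<Rightarrow> int) set \<Rightarrow> ('q \<Rightarrow> int) set monoid" where
  "quotient_group L = \<lparr>carrier = range (coset L),
     monoid.mult = (\<lambda>A B. {(\<lambda>i. a i + b i) | a b. a \<in> A \<and> b \<in> B}), monoid.one = L\<rparr>"

lemma quotient_group_carrier: "carrier (quotient_group L) = range (coset L)"
  by (simp add: quotient_group_def)

lemma quotient_group_one: "\<one>\<^bsub>quotient_group L\<^esub> = L"
  by (simp add: quotient_group_def)

lemma mult_coset:
  assumes L: "is_lattice L"
  shows "coset L x \<otimes>\<^bsub>quotient_group L\<^esub> coset L y = coset L (\<lambda>i. x i + y i)"
proof -
  have "z \<in> coset L (\<lambda>i. x i + y i) \<longleftrightarrow>
      (\<exists>a b. z = (\<lambda>i. a i + b i) \<and> a \<in> coset L x \<and> b \<in> coset L y)" for z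
  proof
    assume "z \<in> coset L (\<lambda>i. x i + y i)"
    then have "(\<lambda>i. z i - y i) \<in> coset L x"
      unfolding mem_coset_iff by (simp add: diff_diff_eq add.commute)
    then show "\<exists>a b. z = (\<lambda>i. a i + b i) \<and> a \<in> coset L x \<and> b \<in> coset L y"
      using self_mem_coset[OF L, of y] by (intro exI[of _ "\<lambda>i. z i - y i"] exI[of _ y]) simp
  next
    assume "\<exists>a b. z = (\<lambda>i. a i + b i) \<and> a \<in> coset L x \<and> b \<in> coset L y"
    then obtain a b where "z = (\<lambda>i. a i + b i)" "a \<in> coset L x" "b \<in> coset L y"
      by blast
    then show "z \<in> coset L (\<lambda>i. x i + y i)"
      using lattice_add[OF L, of "\<lambda>i. a i - x i" "\<lambda>i. b i - y i"]
      unfolding mem_coset_iff by (simp add: algebra_simps)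
  qed
  then show ?thesis by (auto simp: quotient_group_def)
qed

lemma comm_group_quotient_group:
  assumes L: "is_lattice L"
  shows "comm_group (quotient_group L)"
proof (rule comm_groupI)
  fix x y z
  assume "x \<in> carrier (quotient_group L)" "y \<in> carrier (quotient_group L)"
    "z \<in> carrier (quotient_group L)"
  then obtain a b c where x: "x = coset L a" and y: "y = coset L b" and z: "z = coset L c"
    by (auto simp: quotient_group_carrier)
  show "x \<otimes>\<^bsub>quotient_group L\<^esub> y \<in> carrier (quotient_group L)"
    by (simp add: x y mult_coset[OF L] quotient_group_carrier)
  show "x \<otimes>\<^bsub>quotient_group L\<^esub> y \<otimes>\<^bsub>quotient_group L\<^esub> z
      = x \<otimes>\<^bsub>quotient_group L\<^esub> (y \<otimes>\<^bsub>quotient_group L\<^esub> z)"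
    by (simp add: x y z mult_coset[OF L] add.assoc)
  show "x \<otimes>\<^bsub>quotient_group L\<^esub> y = y \<otimes>\<^bsub>quotient_group L\<^esub> x"
    by (simp add: x y mult_coset[OF L] add.commute)
  show "\<one>\<^bsub>quotient_group L\<^esub> \<otimes>\<^bsub>quotient_group L\<^esub> x = x"
    using mult_coset[OF L, of "\<lambda>_. 0" a] by (simp add: x quotient_group_one coset_zero)
  show "\<exists>y\<in>carrier (quotient_group L). y \<otimes>\<^bsub>quotient_group L\<^esub> x = \<one>\<^bsub>quotient_group L\<^esub>"
    using mult_coset[OF L, of "\<lambda>i. - a i" a]
    by (intro bexI[of _ "coset L (\<lambda>i. - a i)"])
      (simp_all add: x quotient_group_one coset_zero quotient_group_carrier)
next
  show "\<one>\<^bsub>quotient_group L\<^esub> \<in> carrier (quotient_group L)"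
    using coset_zero[of L] by (simp add: quotient_group_one quotient_group_carrier) (metis rangeI)
qed

lemma finprod_coset:
  assumes L: "is_lattice L" and "finite F"
  shows "finprod (quotient_group L) (\<lambda>i. coset L (f i)) F = coset L (\<lambda>j. \<Sum>i\<in>F. f i j)"
  using \<open>finite F\<close>
proof (induction F rule: finite_induct)
  case empty
  interpret comm_group "quotient_group L" by (rule comm_group_quotient_group[OF L])
  show ?case by (simp add: quotient_group_one coset_zero)
next
  case (insert a F)
  interpret comm_group "quotient_group L" by (rule comm_group_quotient_group[OF L])
  have "(\<lambda>i. coset L (f i)) \<in> F \<rightarrow> carrier (quotient_group L)"
    by (auto simp: quotient_group_carrier)
  with insert show ?case by (simp add: quotient_group_carrier mult_coset[OF L])
qed

lemma nat_pow_coset: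
  assumes L: "is_lattice L"
  shows "coset L a [^]\<^bsub>quotient_group L\<^esub> (k::nat) = coset L (\<lambda>j. int k * a j)"
  by (induction k) (simp_all add: quotient_group_one coset_zero mult_coset[OF L] algebra_simps)

lemma int_pow_coset:
  assumes L: "is_lattice L"
  shows "coset L a [^]\<^bsub>quotient_group L\<^esub> (k::int) = coset L (\<lambda>j. k * a j)"
proof (cases "k < 0")
  case True
  interpret comm_group "quotient_group L" by (rule comm_group_quotient_group[OF L])
  have "coset L (\<lambda>j. k * a j) \<otimes>\<^bsub>quotient_group L\<^esub> coset L (\<lambda>j. int (nat (-k)) * a j)
      = \<one>\<^bsub>quotient_group L\<^esub>"
    using True coset_zero[of L] by (simp add: mult_coset[OF L] algebra_simps quotient_group_one)
  then have "inv\<^bsub>quotient_group L\<^esub> (coset L (\<lambda>j. int (nat (-k)) * a j)) = coset L (\<lambda>j. k * a j)"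
    by (intro inv_equality) (auto simp: quotient_group_carrier)
  with True show ?thesis by (simp add: int_pow_def2 nat_pow_coset[OF L])
next
  case False
  then show ?thesis by (simp add: int_pow_def2 nat_pow_coset[OF L])
qed

definition unit_coset :: "('q \<Rightarrow> int) set \<Rightarrow> 'q \<Rightarrow> ('q \<Rightarrow> int) set" where
  "unit_coset L i = coset L (\<lambda>j. if i = j then 1 else 0)"

lemma finprod_unit_coset_int_pow:
  assumes L: "is_lattice L"
  shows "finprod (quotient_group L) (\<lambda>i. unit_coset L i [^]\<^bsub>quotient_group L\<^esub> x i) UNIV
      = coset L (x :: 'q::finite \<Rightarrow> int)"
proof -
  have "(\<lambda>j. \<Sum>i\<in>UNIV. x i * (if i = j then 1 else 0)) = x"
    by (simp add: fun_eq_iff if_distrib cong: if_cong)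
  then show ?thesis
    by (simp add: unit_coset_def int_pow_coset[OF L] finprod_coset[OF L])
qed

lemma finprod_unit_coset_nat_pow:
  assumes L: "is_lattice L"
  shows "finprod (quotient_group L) (\<lambda>i. unit_coset L i [^]\<^bsub>quotient_group L\<^esub> m i) UNIV
      = coset L (\<lambda>j. int ((m :: 'q::finite \<Rightarrow> nat) j))"
proof -
  have "unit_coset L i [^]\<^bsub>quotient_group L\<^esub> m i
      = unit_coset L i [^]\<^bsub>quotient_group L\<^esub> int (m i)" for i
    by (simp add: unit_coset_def int_pow_coset[OF L] nat_pow_coset[OF L])
  then show ?thesis by (simp add: finprod_unit_coset_int_pow[OF L])
qed

lemma min_dist_le_d1:
  assumes "finite C" "x \<in> C" "y \<in> C" "x \<noteq> y"
  shows "min_dist C \<le> d1 x y"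
proof -
  have "{d1 x y | x y. x \<in> C \<and> y \<in> C \<and> x \<noteq> y} \<subseteq> case_prod d1 ` (C \<times> C)"
    by auto
  then have "finite {d1 x y | x y. x \<in> C \<and> y \<in> C \<and> x \<noteq> y}"
    using \<open>finite C\<close> by (meson finite_SigmaI finite_imageI finite_subset)
  with assms(2-4) show ?thesis unfolding min_dist_def by (blast intro: Min_le)
qed

lemma d1_add_diff_le:
  fixes m m' :: "'q::finite \<Rightarrow> nat"
  shows "2 * d1 x (\<lambda>i. x i + (int (m i) - int (m' i))) \<le> real (\<Sum>i\<in>UNIV. m i) + real (\<Sum>i\<in>UNIV. m' i)"
proof -
  have "(\<Sum>i\<in>UNIV. real_of_int \<bar>x i - (x i + (int (m i) - int (m' i)))\<bar>)
      \<le> (\<Sum>i\<in>UNIV. real (m i) + real (m' i))"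
    by (rule sum_mono) simp
  then show ?thesis by (simp add: d1_def sum.distrib)
qed

lemma add_diff_mem_linear_code:
  fixes m m' :: "'q::finite \<Rightarrow> nat"
  assumes "L \<subseteq> A_root" and u: "(\<lambda>j. int (m j) - int (m' j)) \<in> L"
    and t_sum: "(\<Sum>i\<in>UNIV. t i) = int n" and "\<forall>j. int (m' j) \<le> t j"
  shows "(\<lambda>j. t j + (int (m j) - int (m' j))) \<in> coset L t \<inter> simplex n"
proof -
  have "(\<Sum>j\<in>UNIV. int (m j) - int (m' j)) = 0"
    using u \<open>L \<subseteq> A_root\<close> unfolding A_root_def by blast
  then have "(\<Sum>j\<in>UNIV. t j + (int (m j) - int (m' j))) = int n"
    using t_sum by (simp add: sum.distrib)
  moreover have "t j + (int (m j) - int (m' j)) \<ge> 0" for j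
    using \<open>\<forall>j. int (m' j) \<le> t j\<close>[rule_format, of j] by linarith
  ultimately show ?thesis
    using u by (simp add: mem_coset_iff simplex_def)
qed

lemma Bh_set_unit_coset:
  fixes L :: "('q::finite \<Rightarrow> int) set" and t :: "'q \<Rightarrow> int"
  assumes L: "is_lattice L" and "L \<subseteq> A_root"
    and t_sum: "(\<Sum>i\<in>UNIV. t i) = int n" and t_ge: "\<forall>i. t i \<ge> int h"
    and C: "C = coset L t \<inter> simplex n" and "finite C"
    and "min_dist C > real h"
  shows "Bh_set (quotient_group L) h (unit_coset L)"
  unfolding Bh_set_def
proof (intro conjI allI impI)
  show "unit_coset L i \<in> carrier (quotient_group L)" for i
    by (simp add: unit_coset_def quotient_group_carrier)
next
  fix m m' :: "'q \<Rightarrow> nat"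
  assume m: "(\<Sum>i\<in>UNIV. m i) = h" and m': "(\<Sum>i\<in>UNIV. m' i) = h"
    and "finprod (quotient_group L) (\<lambda>i. unit_coset L i [^]\<^bsub>quotient_group L\<^esub> m i) UNIV
       = finprod (quotient_group L) (\<lambda>i. unit_coset L i [^]\<^bsub>quotient_group L\<^esub> m' i) UNIV"
  then have u: "(\<lambda>j. int (m j) - int (m' j)) \<in> L"
    by (simp add: finprod_unit_coset_nat_pow[OF L] coset_eq_iff[OF L])
  define y where "y = (\<lambda>j. t j + (int (m j) - int (m' j)))"
  have "t j \<ge> 0" for j
    using t_ge[rule_format, of j] by linarith
  then have "t \<in> C"
    using t_sum self_mem_coset[OF L] by (simp add: C simplex_def)
  have "int (m' j) \<le> t j" for j
    using member_le_sum[of j UNIV m'] m' t_ge[rule_format, of j] by simp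
  then have "y \<in> C"
    unfolding C y_def using add_diff_mem_linear_code[OF \<open>L \<subseteq> A_root\<close> u t_sum] by blast
  have "t = y"
  proof (rule ccontr)
    assume "t \<noteq> y"
    from min_dist_le_d1[OF \<open>finite C\<close> \<open>t \<in> C\<close> \<open>y \<in> C\<close> this] d1_add_diff_le[of t m m']
    show False using \<open>min_dist C > real h\<close> by (simp add: m m' y_def)
  qed
  have "int (m j) = int (m' j)" for j
    using fun_cong[OF \<open>t = y\<close>, of j] by (simp add: y_def)
  then show "m = m'" by (simp add: fun_eq_iff)
qed

theorem mainTheorem14:
  fixes L :: "('q::finite \<Rightarrow> int) set" and t :: "'q \<Rightarrow> int" and n h :: nat
    and C :: "('q \<Rightarrow> int) set"
  assumes "is_lattice L" and "L \<subseteq> A_root"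
    and "(\<Sum>i\<in>UNIV. t i) = int n" and "\<forall>i. t i \<ge> int h"
    and "C = coset L t \<inter> simplex n"
    and "multiset_code n C"
    and "min_dist C > real h"
  shows "\<exists>(G :: ('q \<Rightarrow> int) set monoid) (b :: 'q \<Rightarrow> ('q \<Rightarrow> int) set) b0.
           comm_group G \<and> Bh_set G h b \<and> b0 \<in> carrier G \<and>
           C = {x \<in> simplex n. finprod G (\<lambda>i. b i [^]\<^bsub>G\<^esub> x i) UNIV = b0}"
proof (intro exI conjI)
  have "finite C"
    using \<open>multiset_code n C\<close> unfolding multiset_code_def by (metis card.infinite not_numeral_le_zero)
  with assms show "Bh_set (quotient_group L) h (unit_coset L)"
    by (intro Bh_set_unit_coset)
  show "comm_group (quotient_group L)"
    using \<open>is_lattice L\<close> by (rule comm_group_quotient_group)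
  show "coset L t \<in> carrier (quotient_group L)"
    by (simp add: quotient_group_carrier)
  show "C = {x \<in> simplex n.
      finprod (quotient_group L) (\<lambda>i. unit_coset L i [^]\<^bsub>quotient_group L\<^esub> x i) UNIV = coset L t}"
    using assms(5) by (simp add: finprod_unit_coset_int_pow[OF assms(1)] coset_eq_iff[OF assms(1)]
        mem_coset_iff[symmetric] Int_def conj_commute)
qed

end
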